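(* Let $\mathbf A$ be a finite subdirectly irreducible cBCK-algebra of height $n=\mathrm{h}(\mathbf A)$, let $k$ be a divisor of $n$ with $k\neq 1$ and $k\neq n$, and let $A_k=\{x\in A \mid k \text{ divides } \mathrm{h}(x)\}$. Then $A_k\cup \mathrm{m}(\mathbf A)$ is the universe of a subalgebra of $\mathbf A$ if and only if $\mathrm{b}(\mathbf A)\subseteq A_k$ and $\mathrm{m}(\mathbf A)\subseteq A_k$.
   Context: A BCK-algebra is an algebra $(A,\ominus,0)$ of type $(2,0)$ satisfying $((x\ominus y)\ominus(x\ominus z))\ominus(z\ominus y)=0$, $x\ominus 0=x$, $0\ominus x=0$, and ($x\ominus y=0$ and $y\ominus x=0$ imply $x=y$); it is ordered by $x\le y$ iff $x\ominus y=0$. A cBCK-algebra is a BCK-algebra satisfying $x\ominus(x\ominus y)=y\ominus(y\ominus x)$; its order is a meet-semilattice with $x\wedge y=x\ominus(x\ominus y)$. Finite subdirectly irreducible cBCK-algebras are, as posets, rooted trees with root $0$ (with a unique atom if nontrivial). For $a\in A$, the height is $\mathrm{h}(a)=|[0,a]|-1$, and $\mathrm{h}(\mathbf A)=\sup\{\mathrm{h}(a)\mid a\in A\}$. $\mathrm{m}(\mathbf A)$ is the set of maximal elements of $\mathbf A$. $\mathrm{b}(\mathbf A)$ is the set of branching elements: $b\in\mathrm{b}(\mathbf A)$ iff there exist $c,d\in A$ with $c,d>b$ and $c\wedge d=b$. *)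

theory Defs
  imports Main
begin

definition bck_algebra :: "'a set \<Rightarrow> ('a \<Rightarrow> 'a \<Rightarrow> 'a) \<Rightarrow> 'a \<Rightarrow> bool" where
  "bck_algebra A sub zero \<longleftrightarrow>
     zero \<in> A \<and> (\<forall>x\<in>A. \<forall>y\<in>A. sub x y \<in> A) \<and>
     (\<forall>x\<in>A. \<forall>y\<in>A. \<forall>z\<in>A. sub (sub (sub x y) (sub x z)) (sub z y) = zero) \<and>
     (\<forall>x\<in>A. sub x zero = x) \<and>
     (\<forall>x\<in>A. sub zero x = zero) \<and>
     (\<forall>x\<in>A. \<forall>y\<in>A. sub x y = zero \<and> sub y x = zero \<longrightarrow> x = y)"

definition cbck_algebra :: "'a set \<Rightarrow> ('a \<Rightarrow> 'a \<Rightarrow> 'a) \<Rightarrow> 'a \<Rightarrow> bool" where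
  "cbck_algebra A sub zero \<longleftrightarrow> bck_algebra A sub zero \<and>
     (\<forall>x\<in>A. \<forall>y\<in>A. sub x (sub x y) = sub y (sub y x))"

definition bck_le :: "('a \<Rightarrow> 'a \<Rightarrow> 'a) \<Rightarrow> 'a \<Rightarrow> 'a \<Rightarrow> 'a \<Rightarrow> bool" where
  "bck_le sub zero x y \<longleftrightarrow> sub x y = zero"

definition bck_meet :: "('a \<Rightarrow> 'a \<Rightarrow> 'a) \<Rightarrow> 'a \<Rightarrow> 'a \<Rightarrow> 'a" where
  "bck_meet sub x y = sub x (sub x y)"

definition congruence :: "'a set \<Rightarrow> ('a \<Rightarrow> 'a \<Rightarrow> 'a) \<Rightarrow> ('a \<times> 'a) set \<Rightarrow> bool" where
  "congruence A sub \<theta> \<longleftrightarrow> equiv A \<theta> \<and>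
     (\<forall>x y u v. (x, y) \<in> \<theta> \<longrightarrow> (u, v) \<in> \<theta> \<longrightarrow> (sub x u, sub y v) \<in> \<theta>)"

text \<open>Subdirectly irreducible: nontrivial, and there is a least congruence
  among the congruences different from the identity (a monolith).\<close>
definition subdirectly_irreducible :: "'a set \<Rightarrow> ('a \<Rightarrow> 'a \<Rightarrow> 'a) \<Rightarrow> bool" where
  "subdirectly_irreducible A sub \<longleftrightarrow>
     (\<exists>x\<in>A. \<exists>y\<in>A. x \<noteq> y) \<and>
     (\<exists>\<mu>. congruence A sub \<mu> \<and> \<mu> \<noteq> Id_on A \<and>
        (\<forall>\<theta>. congruence A sub \<theta> \<and> \<theta> \<noteq> Id_on A \<longrightarrow> \<mu> \<subseteq> \<theta>))"

definition height :: "'a set \<Rightarrow> ('a \<Rightarrow> 'a \<Rightarrow> 'a) \<Rightarrow> 'a \<Rightarrow> 'a \<Rightarrow> nat" where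
  "height A sub zero a = card {x \<in> A. bck_le sub zero zero x \<and> bck_le sub zero x a} - 1"

definition alg_height :: "'a set \<Rightarrow> ('a \<Rightarrow> 'a \<Rightarrow> 'a) \<Rightarrow> 'a \<Rightarrow> nat" where
  "alg_height A sub zero = Sup (height A sub zero ` A)"

definition maximals :: "'a set \<Rightarrow> ('a \<Rightarrow> 'a \<Rightarrow> 'a) \<Rightarrow> 'a \<Rightarrow> 'a set" where
  "maximals A sub zero = {a \<in> A. \<forall>b\<in>A. bck_le sub zero a b \<longrightarrow> b = a}"

definition branchings :: "'a set \<Rightarrow> ('a \<Rightarrow> 'a \<Rightarrow> 'a) \<Rightarrow> 'a \<Rightarrow> 'a set" where
  "branchings A sub zero = {b \<in> A. \<exists>c\<in>A. \<exists>d\<in>A.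
      bck_le sub zero b c \<and> c \<noteq> b \<and> bck_le sub zero b d \<and> d \<noteq> b \<and> bck_meet sub c d = b}"

definition is_subuniverse :: "'a set \<Rightarrow> ('a \<Rightarrow> 'a \<Rightarrow> 'a) \<Rightarrow> 'a \<Rightarrow> 'a set \<Rightarrow> bool" where
  "is_subuniverse A sub zero S \<longleftrightarrow> S \<subseteq> A \<and> zero \<in> S \<and> (\<forall>x\<in>S. \<forall>y\<in>S. sub x y \<in> S)"

end

theory Submission
  imports Defs
begin

(*
  A subdirectly irreducible cBCK-algebra is a tree: the monolith provides an element lying in
  every nonzero ideal, in particular in the annihilator of x whenever x \<sqinter> y = 0, so nonzero
  elements have nonzero meets; together with prelinearity (x \<ominus> y) \<sqinter> (y \<ominus> x) = 0 below a
  common bound this makes every down-set a chain. In the finite case w \<mapsto> x \<ominus> w maps the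
  interval [y, x] bijectively onto the down-set of x \<ominus> y, so h(x \<ominus> y) + h(x \<sqinter> y) = h(x).

  Hence x \<ominus> y stays in A_k for x, y \<in> A_k as soon as the meet x \<sqinter> y does, and that meet is
  x, y or a branching element. Conversely, a branching element b = c \<sqinter> d is also the meet of
  maximal elements above c and d, and for a maximal m the elements t \<ominus> m and m \<ominus> (t \<sqinter> m),
  with t maximal of height n, are not maximal, which forces k to divide h(t \<sqinter> m) and then h(m).
*)

locale cbck =
  fixes A :: "'a set" and sub :: "'a \<Rightarrow> 'a \<Rightarrow> 'a" (infixl "\<ominus>" 65) and zero :: 'a
  assumes cbck_algebra: "cbck_algebra A sub zero"
begin

abbreviation below :: "'a \<Rightarrow> 'a \<Rightarrow> bool" (infix "\<preceq>" 50)
  where "x \<preceq> y \<equiv> x \<ominus> y = zero"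

abbreviation meet :: "'a \<Rightarrow> 'a \<Rightarrow> 'a" (infixl "\<sqinter>" 70)
  where "x \<sqinter> y \<equiv> x \<ominus> (x \<ominus> y)"

lemma bck_le_iff [simp]: "bck_le sub zero x y \<longleftrightarrow> x \<preceq> y"
  by (simp add: bck_le_def)

lemma bck_meet_eq [simp]: "bck_meet sub x y = x \<sqinter> y"
  by (simp add: bck_meet_def)

lemma zero_closed [simp]: "zero \<in> A"
  using cbck_algebra unfolding cbck_algebra_def bck_algebra_def by blast

lemma sub_closed [simp]: "x \<in> A \<Longrightarrow> y \<in> A \<Longrightarrow> x \<ominus> y \<in> A"
  using cbck_algebra unfolding cbck_algebra_def bck_algebra_def by blast

lemma bck_axiom: "x \<in> A \<Longrightarrow> y \<in> A \<Longrightarrow> z \<in> A \<Longrightarrow> (x \<ominus> y) \<ominus> (x \<ominus> z) \<preceq> z \<ominus> y"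
  using cbck_algebra unfolding cbck_algebra_def bck_algebra_def by blast

lemma sub_zero [simp]: "x \<in> A \<Longrightarrow> x \<ominus> zero = x"
  using cbck_algebra unfolding cbck_algebra_def bck_algebra_def by blast

lemma zero_sub [simp]: "x \<in> A \<Longrightarrow> zero \<ominus> x = zero"
  using cbck_algebra unfolding cbck_algebra_def bck_algebra_def by blast

lemma below_antisym: "x \<in> A \<Longrightarrow> y \<in> A \<Longrightarrow> x \<preceq> y \<Longrightarrow> y \<preceq> x \<Longrightarrow> x = y"
  using cbck_algebra unfolding cbck_algebra_def bck_algebra_def by blast

lemma meet_commute: "x \<in> A \<Longrightarrow> y \<in> A \<Longrightarrow> x \<sqinter> y = y \<sqinter> x"
  using cbck_algebra unfolding cbck_algebra_def by blast

lemma sub_self [simp]: "x \<in> A \<Longrightarrow> x \<ominus> x = zero"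
  using bck_axiom[of x zero zero] by simp

lemma sub_below: "x \<in> A \<Longrightarrow> y \<in> A \<Longrightarrow> x \<ominus> y \<preceq> x"
  using bck_axiom[of x y zero] by simp

lemma meet_below_right: "x \<in> A \<Longrightarrow> y \<in> A \<Longrightarrow> x \<sqinter> y \<preceq> y"
  using bck_axiom[of x zero y] by simp

lemma below_trans: "x \<in> A \<Longrightarrow> y \<in> A \<Longrightarrow> z \<in> A \<Longrightarrow> x \<preceq> y \<Longrightarrow> y \<preceq> z \<Longrightarrow> x \<preceq> z"
  using bck_axiom[of x z y] by simp

lemma sub_antimono: "x \<in> A \<Longrightarrow> y \<in> A \<Longrightarrow> z \<in> A \<Longrightarrow> x \<preceq> y \<Longrightarrow> z \<ominus> y \<preceq> z \<ominus> x"
  using bck_axiom[of z y x] by simp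

lemma sub_mono: "x \<in> A \<Longrightarrow> y \<in> A \<Longrightarrow> z \<in> A \<Longrightarrow> x \<preceq> y \<Longrightarrow> x \<ominus> z \<preceq> y \<ominus> z"
  using bck_axiom[of x z y] by simp

lemma meet_eq_right: "x \<in> A \<Longrightarrow> y \<in> A \<Longrightarrow> x \<preceq> y \<Longrightarrow> y \<sqinter> x = x"
  using meet_commute[of x y] by simp

lemma meet_greatest:
  assumes "x \<in> A" "y \<in> A" "z \<in> A" "z \<preceq> x" "z \<preceq> y"
  shows "z \<preceq> x \<sqinter> y"
proof -
  have "x \<sqinter> z \<preceq> x \<sqinter> y"
    using assms sub_antimono[of "x \<ominus> y" "x \<ominus> z" x] sub_antimono[of z y x] by simp
  then show ?thesis
    using assms meet_eq_right[of z x] by simp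
qed

lemma sub_meet: "x \<in> A \<Longrightarrow> y \<in> A \<Longrightarrow> x \<ominus> (x \<sqinter> y) = x \<ominus> y"
  by (rule below_antisym) (simp_all add: meet_below_right sub_antimono)

lemma sub_exchange:
  assumes "x \<in> A" "y \<in> A" "z \<in> A"
  shows "(x \<ominus> y) \<ominus> z = (x \<ominus> z) \<ominus> y"
proof -
  have exchange_below: "(x \<ominus> y) \<ominus> z \<preceq> (x \<ominus> z) \<ominus> y" if "x \<in> A" "y \<in> A" "z \<in> A" for x y z
  proof -
    have "(x \<ominus> y) \<ominus> z \<preceq> (x \<ominus> y) \<ominus> (x \<sqinter> z)"
      using that sub_antimono[of "x \<sqinter> z" z "x \<ominus> y"] meet_below_right by simp
    moreover have "(x \<ominus> y) \<ominus> (x \<sqinter> z) \<preceq> (x \<ominus> z) \<ominus> y"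
      using that bck_axiom[of x y "x \<ominus> z"] by simp
    ultimately show ?thesis
      using that below_trans[of "(x \<ominus> y) \<ominus> z" "(x \<ominus> y) \<ominus> (x \<sqinter> z)" "(x \<ominus> z) \<ominus> y"]
      by simp
  qed
  show ?thesis
    by (rule below_antisym) (simp_all add: assms exchange_below)
qed

lemma sub_sub_below: "x \<in> A \<Longrightarrow> y \<in> A \<Longrightarrow> z \<in> A \<Longrightarrow> (x \<ominus> z) \<ominus> (y \<ominus> z) \<preceq> x \<ominus> y"
  using bck_axiom[of x z y] sub_exchange[of "x \<ominus> z" "y \<ominus> z" "x \<ominus> y"] by simp

lemma sub_eq_sub_complements:
  "x \<in> A \<Longrightarrow> y \<in> A \<Longrightarrow> u \<in> A \<Longrightarrow> x \<preceq> u \<Longrightarrow> x \<ominus> y = (u \<ominus> y) \<ominus> (u \<ominus> x)"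
  using sub_exchange[of u y "u \<ominus> x"] meet_eq_right[of x u] by simp

lemma below_sub_swap:
  "p \<in> A \<Longrightarrow> q \<in> A \<Longrightarrow> c \<in> A \<Longrightarrow> q \<preceq> p \<Longrightarrow> c \<preceq> p \<ominus> q \<Longrightarrow> q \<preceq> p \<ominus> c"
  using bck_axiom[of p "p \<ominus> q" c] meet_eq_right[of q p] by simp

text \<open>Inside the interval from zero to u, the map w \<mapsto> u \<ominus> w is an order-reversing
  involution; the claim is proved by passing to these complements.\<close>
lemma prelinearity:
  assumes A: "x \<in> A" "y \<in> A" "u \<in> A" and "x \<preceq> u" "y \<preceq> u"
  shows "(x \<ominus> y) \<sqinter> (y \<ominus> x) = zero"
proof -
  define d where "d = x \<sqinter> y"
  define c where "c = (x \<ominus> y) \<sqinter> (y \<ominus> x)"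
  define r where "r = (u \<ominus> d) \<ominus> c"
  have dA: "d \<in> A" and cA: "c \<in> A" and rA: "r \<in> A"
    using A by (simp_all add: d_def c_def r_def)
  have dx: "d \<preceq> x"
    using A sub_below by (simp add: d_def)
  have dy: "d \<preceq> y"
    using A meet_below_right by (simp add: d_def)
  have c_xd: "c \<preceq> x \<ominus> d"
    using A sub_below[of "x \<ominus> y" "(x \<ominus> y) \<ominus> (y \<ominus> x)"] sub_meet[of x y] by (simp add: c_def d_def)
  have "c \<preceq> y \<ominus> x"
    using A meet_below_right[of "x \<ominus> y" "y \<ominus> x"] by (simp add: c_def)
  then have c_yd: "c \<preceq> y \<ominus> d"
    unfolding d_def meet_commute[OF A(1,2)] using sub_meet[OF A(2,1)] by simp
  have complement_below: "u \<ominus> w \<preceq> r" if "w \<in> A" "d \<preceq> w" "w \<preceq> u" "c \<preceq> w \<ominus> d" for w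
  proof -
    have "u \<ominus> w \<preceq> u \<ominus> d"
      using that A dA sub_antimono[of d w u] by simp
    moreover have "c \<preceq> (u \<ominus> d) \<ominus> (u \<ominus> w)"
      using that A dA sub_eq_sub_complements[of w d u] by simp
    ultimately show ?thesis
      using A dA cA that below_sub_swap[of "u \<ominus> d" "u \<ominus> w" c] by (simp add: r_def)
  qed
  have below_complement: "u \<ominus> r \<preceq> w" if "w \<in> A" "w \<preceq> u" "u \<ominus> r \<preceq> u \<ominus> (u \<ominus> w)" for w
    using that A meet_eq_right[of w u] by simp
  have "u \<ominus> r \<preceq> x" "u \<ominus> r \<preceq> y"
    using A assms(4,5) dx dy c_xd c_yd rA complement_below
      sub_antimono[of "u \<ominus> x" r u] sub_antimono[of "u \<ominus> y" r u] below_complement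
    by simp_all
  then have "u \<ominus> r \<preceq> d"
    using A rA meet_greatest[of x y "u \<ominus> r"] by (simp add: d_def)
  moreover have "r \<preceq> u"
    using A dA cA sub_below[of "u \<ominus> d" c] sub_below[of u d] below_trans[of r "u \<ominus> d" u]
    by (simp add: r_def)
  ultimately have "(u \<ominus> d) \<sqinter> c = zero"
    using A dA rA sub_antimono[of "u \<ominus> r" d u] meet_eq_right[of r u] by (simp add: r_def)
  moreover have "c \<preceq> u \<ominus> d"
    using A dA cA c_xd assms(4) sub_mono[of x u d] below_trans[of c "x \<ominus> d" "u \<ominus> d"] by simp
  ultimately show ?thesis
    using A dA cA meet_eq_right[of c "u \<ominus> d"] by (simp add: c_def)
qed

definition bck_ideal :: "'a set \<Rightarrow> bool" where
  "bck_ideal I \<longleftrightarrow> I \<subseteq> A \<and> zero \<in> I \<and> (\<forall>x\<in>A. \<forall>y\<in>I. x \<ominus> y \<in> I \<longrightarrow> x \<in> I)"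

definition ideal_congruence :: "'a set \<Rightarrow> ('a \<times> 'a) set" where
  "ideal_congruence I = {(x, y). x \<in> A \<and> y \<in> A \<and> x \<ominus> y \<in> I \<and> y \<ominus> x \<in> I}"

lemma bck_idealD: "bck_ideal I \<Longrightarrow> x \<in> A \<Longrightarrow> y \<in> I \<Longrightarrow> x \<ominus> y \<in> I \<Longrightarrow> x \<in> I"
  unfolding bck_ideal_def by blast

lemma bck_ideal_down_closed: "bck_ideal I \<Longrightarrow> x \<in> A \<Longrightarrow> y \<in> I \<Longrightarrow> x \<preceq> y \<Longrightarrow> x \<in> I"
  unfolding bck_ideal_def by auto

lemma bck_ideal_sub_trans:
  assumes I: "bck_ideal I" and A: "x \<in> A" "y \<in> A" "z \<in> A" and "x \<ominus> y \<in> I" "y \<ominus> z \<in> I"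
  shows "x \<ominus> z \<in> I"
proof -
  have "(x \<ominus> z) \<ominus> (x \<ominus> y) \<in> I"
    using bck_ideal_down_closed[OF I _ assms(6) bck_axiom[of x z y]] A by simp
  then show ?thesis
    using bck_idealD[OF I _ assms(5)] A by simp
qed

lemma ideal_congruence_trans:
  assumes "bck_ideal I" "(x, y) \<in> ideal_congruence I" "(y, z) \<in> ideal_congruence I"
  shows "(x, z) \<in> ideal_congruence I"
  using assms bck_ideal_sub_trans[OF assms(1), of x y z] bck_ideal_sub_trans[OF assms(1), of z y x]
  unfolding ideal_congruence_def by simp

lemma congruence_ideal_congruence:
  assumes I: "bck_ideal I"
  shows "congruence A sub (ideal_congruence I)"
proof -
  have "equiv A (ideal_congruence I)"
  proof (rule equivI)
    show "ideal_congruence I \<subseteq> A \<times> A"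
      unfolding ideal_congruence_def by blast
    show "refl_on A (ideal_congruence I)"
      using I unfolding refl_on_def ideal_congruence_def bck_ideal_def by auto
    show "sym (ideal_congruence I)"
      unfolding sym_def ideal_congruence_def by blast
    show "trans (ideal_congruence I)"
      unfolding trans_def using ideal_congruence_trans[OF I] by blast
  qed
  moreover have "(x \<ominus> u, y \<ominus> v) \<in> ideal_congruence I"
    if xy: "(x, y) \<in> ideal_congruence I" and uv: "(u, v) \<in> ideal_congruence I" for x y u v
  proof -
    have A: "x \<in> A" "y \<in> A" "u \<in> A" "v \<in> A"
      and I_xy: "x \<ominus> y \<in> I" "y \<ominus> x \<in> I" and I_uv: "u \<ominus> v \<in> I" "v \<ominus> u \<in> I"
      using xy uv unfolding ideal_congruence_def by auto
    have "(x \<ominus> u, y \<ominus> u) \<in> ideal_congruence I"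
      using A bck_ideal_down_closed[OF I _ I_xy(1) sub_sub_below[of x y u]]
        bck_ideal_down_closed[OF I _ I_xy(2) sub_sub_below[of y x u]]
      unfolding ideal_congruence_def by simp
    moreover have "(y \<ominus> u, y \<ominus> v) \<in> ideal_congruence I"
      using A bck_ideal_down_closed[OF I _ I_uv(1) bck_axiom[of y v u]]
        bck_ideal_down_closed[OF I _ I_uv(2) bck_axiom[of y u v]]
      unfolding ideal_congruence_def by simp
    ultimately show ?thesis
      using ideal_congruence_trans[OF I] by blast
  qed
  ultimately show ?thesis
    unfolding congruence_def by blast
qed

lemma ideal_congruence_nontrivial:
  assumes "bck_ideal I" "a \<in> I" "a \<noteq> zero"
  shows "ideal_congruence I \<noteq> Id_on A"
proof -
  have "(a, zero) \<in> ideal_congruence I"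
    using assms unfolding ideal_congruence_def bck_ideal_def by auto
  then show ?thesis
    using assms(3) by auto
qed

lemma annihilator_ideal:
  assumes x: "x \<in> A"
  shows "bck_ideal {z \<in> A. z \<sqinter> x = zero}"
  unfolding bck_ideal_def
proof (intro conjI ballI impI)
  fix z w
  assume z: "z \<in> A" and w: "w \<in> {z \<in> A. z \<sqinter> x = zero}"
    and zw: "z \<ominus> w \<in> {z \<in> A. z \<sqinter> x = zero}"
  define u where "u = z \<sqinter> x"
  have uA: "u \<in> A" and wA: "w \<in> A"
    using x z w by (simp_all add: u_def)
  have uz: "u \<preceq> z" and ux: "u \<preceq> x"
    using x z sub_below meet_below_right by (simp_all add: u_def)
  have "u \<ominus> w \<preceq> (z \<ominus> w) \<sqinter> x"
    using x z uA wA uz ux sub_mono[of u z w] sub_below[of u w]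
      below_trans[of "u \<ominus> w" u x] meet_greatest[of "z \<ominus> w" x "u \<ominus> w"]
    by simp
  then have "u \<preceq> w \<sqinter> x"
    using x uA wA ux zw meet_greatest[of w x u] by simp
  then have "u = zero"
    using uA w by simp
  then show "z \<in> {z \<in> A. z \<sqinter> x = zero}"
    using z by (simp add: u_def)
qed (use x in auto)

abbreviation ht :: "'a \<Rightarrow> nat" where
  "ht \<equiv> height A sub zero"

definition downset :: "'a \<Rightarrow> 'a set" where
  "downset x = {w \<in> A. w \<preceq> x}"

definition interval :: "'a \<Rightarrow> 'a \<Rightarrow> 'a set" where
  "interval y x = {w \<in> A. y \<preceq> w \<and> w \<preceq> x}"

lemma height_eq_card_downset: "ht x = card (downset x) - 1"
  unfolding height_def downset_def by (metis (lifting) bck_le_iff zero_sub)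

lemma bij_betw_interval_downset:
  assumes x: "x \<in> A" and y: "y \<in> A" and yx: "y \<preceq> x"
  shows "bij_betw ((\<ominus>) x) (interval y x) (downset (x \<ominus> y))"
proof (rule bij_betw_byWitness[where f' = "(\<ominus>) x"])
  show "\<forall>w\<in>interval y x. x \<ominus> (x \<ominus> w) = w"
    using x meet_eq_right unfolding interval_def by blast
  show "\<forall>v\<in>downset (x \<ominus> y). x \<ominus> (x \<ominus> v) = v"
  proof
    fix v assume "v \<in> downset (x \<ominus> y)"
    then have "v \<in> A" "v \<preceq> x"
      using x y sub_below[of x y] below_trans[of v "x \<ominus> y" x] unfolding downset_def by auto
    then show "x \<ominus> (x \<ominus> v) = v"
      using x meet_eq_right by simp
  qed
  show "(\<ominus>) x ` interval y x \<subseteq> downset (x \<ominus> y)"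
    using x y sub_antimono unfolding interval_def downset_def by auto
  show "(\<ominus>) x ` downset (x \<ominus> y) \<subseteq> interval y x"
  proof
    fix w assume "w \<in> (\<ominus>) x ` downset (x \<ominus> y)"
    then obtain v where v: "v \<in> A" "v \<preceq> x \<ominus> y" and w: "w = x \<ominus> v"
      unfolding downset_def by blast
    have "x \<sqinter> y \<preceq> x \<ominus> v"
      using x y v sub_antimono[of v "x \<ominus> y" x] by simp
    then show "w \<in> interval y x"
      using x y v w yx meet_eq_right[of y x] sub_below[of x v] unfolding interval_def by simp
  qed
qed

lemma downset_Int_interval: "y \<in> A \<Longrightarrow> y \<preceq> x \<Longrightarrow> downset y \<inter> interval y x = {y}"
  unfolding downset_def interval_def using below_antisym by auto

lemma meet_in_branchings:
  assumes "x \<in> A" "y \<in> A" "x \<sqinter> y \<noteq> x" "x \<sqinter> y \<noteq> y"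
  shows "x \<sqinter> y \<in> branchings A sub zero"
proof -
  have "x \<sqinter> y \<in> A" "x \<sqinter> y \<preceq> x" "x \<sqinter> y \<preceq> y" "x \<noteq> x \<sqinter> y" "y \<noteq> x \<sqinter> y"
    using assms sub_below meet_below_right by simp_all
  then show ?thesis
    using assms(1,2) unfolding branchings_def bck_le_iff bck_meet_eq mem_Collect_eq by blast
qed

lemma maximals_iff:
  "m \<in> maximals A sub zero \<longleftrightarrow> m \<in> A \<and> (\<forall>b\<in>A. m \<preceq> b \<longrightarrow> b = m)"
  by (simp add: maximals_def)

definition height_multiples :: "nat \<Rightarrow> 'a set" where
  "height_multiples k = {x \<in> A. k dvd ht x}"

end

locale si_cbck = cbck +
  assumes subdirectly_irreducible: "subdirectly_irreducible A sub"
begin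

lemma exists_nonzero: "\<exists>x\<in>A. x \<noteq> zero"
  using subdirectly_irreducible zero_closed unfolding subdirectly_irreducible_def by metis

text \<open>The differences of a pair of distinct elements collapsed by the monolith lie in
  every nonzero ideal, and one of them is nonzero.\<close>
lemma exists_element_of_nonzero_ideals:
  "\<exists>e\<in>A. e \<noteq> zero \<and> (\<forall>I. bck_ideal I \<longrightarrow> (\<exists>a\<in>I. a \<noteq> zero) \<longrightarrow> e \<in> I)"
proof -
  obtain \<mu> where \<mu>: "congruence A sub \<mu>" "\<mu> \<noteq> Id_on A"
    and least: "\<And>\<theta>. congruence A sub \<theta> \<Longrightarrow> \<theta> \<noteq> Id_on A \<Longrightarrow> \<mu> \<subseteq> \<theta>"
    using subdirectly_irreducible unfolding subdirectly_irreducible_def by blast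
  have "\<mu> \<subseteq> A \<times> A" "Id_on A \<subseteq> \<mu>"
    using \<mu>(1) unfolding congruence_def equiv_def refl_on_def by auto
  then obtain p q where pq: "(p, q) \<in> \<mu>" "p \<noteq> q" "p \<in> A" "q \<in> A"
    using \<mu>(2) by auto
  have in_ideals: "p \<ominus> q \<in> I \<and> q \<ominus> p \<in> I" if "bck_ideal I" "a \<in> I" "a \<noteq> zero" for I a
    using pq(1) least[OF congruence_ideal_congruence ideal_congruence_nontrivial] that
    unfolding ideal_congruence_def by blast
  have "p \<ominus> q \<noteq> zero \<or> q \<ominus> p \<noteq> zero"
    using pq below_antisym by blast
  then show ?thesis
    using pq(3,4) in_ideals by (metis sub_closed)
qed

lemma meet_nonzero:
  assumes "x \<in> A" "y \<in> A" "x \<noteq> zero" "y \<noteq> zero"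
  shows "x \<sqinter> y \<noteq> zero"
proof
  assume "x \<sqinter> y = zero"
  obtain e where e: "e \<in> A" "e \<noteq> zero"
    and e_in: "\<And>I. bck_ideal I \<Longrightarrow> \<exists>a\<in>I. a \<noteq> zero \<Longrightarrow> e \<in> I"
    using exists_element_of_nonzero_ideals by blast
  have "y \<sqinter> x = zero"
    using \<open>x \<sqinter> y = zero\<close> meet_commute assms by metis
  then have "e \<sqinter> x = zero"
    using e_in[OF annihilator_ideal[of x]] assms by blast
  then have "x \<sqinter> e = zero"
    using meet_commute assms e by metis
  then have "e \<sqinter> e = zero"
    using e_in[OF annihilator_ideal[of e]] assms e by blast
  then show False
    using e by simp
qed

lemma below_common_comparable:
  assumes "w \<in> A" "y \<in> A" "x \<in> A" "w \<preceq> x" "y \<preceq> x"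
  shows "w \<preceq> y \<or> y \<preceq> w"
  using prelinearity[of w y x] meet_nonzero[of "w \<ominus> y" "y \<ominus> w"] assms by auto

lemma downset_eq_Un_interval:
  assumes "x \<in> A" "y \<in> A" "y \<preceq> x"
  shows "downset x = downset y \<union> interval y x"
  using assms below_common_comparable below_trans unfolding downset_def interval_def by blast

lemma meet_upper_bounds_eq:
  assumes A: "c \<in> A" "d \<in> A" "c' \<in> A" "d' \<in> A"
    and incomparable: "c \<sqinter> d \<noteq> c" "c \<sqinter> d \<noteq> d"
    and "c \<preceq> c'" "d \<preceq> d'"
  shows "c' \<sqinter> d' = c \<sqinter> d"
proof -
  have not_cd: "\<not> c \<preceq> d"
    using A incomparable(1) by (metis sub_zero)
  have not_dc: "\<not> d \<preceq> c"
    using A incomparable(2) meet_eq_right[of d c] by blast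
  define e where "e = c' \<sqinter> d'"
  have eA: "e \<in> A" and ec': "e \<preceq> c'" and ed': "e \<preceq> d'"
    using A sub_below meet_below_right by (simp_all add: e_def)
  have "e \<preceq> c"
    using below_common_comparable[of e c c'] below_common_comparable[of c d d']
      below_trans[of c e d'] A eA ec' ed' assms(7,8) not_cd not_dc by blast
  moreover have "e \<preceq> d"
    using below_common_comparable[of e d d'] below_common_comparable[of c d c']
      below_trans[of d e c'] A eA ec' ed' assms(7,8) not_cd not_dc by blast
  ultimately have e_below: "e \<preceq> c \<sqinter> d"
    using A eA meet_greatest by simp
  have below_e: "c \<sqinter> d \<preceq> e"
    using A assms(7,8) sub_below[of c "c \<ominus> d"] meet_below_right[of c d]
      below_trans[of "c \<sqinter> d" c c'] below_trans[of "c \<sqinter> d" d d'] meet_greatest[of c' d' "c \<sqinter> d"]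
    by (simp add: e_def)
  show ?thesis
    using below_antisym[OF eA _ e_below below_e] A unfolding e_def by simp
qed

lemma maximals_nonzero: "m \<in> maximals A sub zero \<Longrightarrow> m \<noteq> zero"
  using exists_nonzero unfolding maximals_iff by force

end

locale finite_si_cbck = si_cbck +
  assumes finite_carrier: "finite A"
begin

lemma finite_downset: "finite (downset x)"
  using finite_carrier unfolding downset_def by simp

lemma card_downset: "x \<in> A \<Longrightarrow> card (downset x) = Suc (ht x)"
proof -
  assume "x \<in> A"
  then have "downset x \<noteq> {}"
    unfolding downset_def by auto
  then have "card (downset x) > 0"
    using finite_downset card_gt_0_iff by blast
  then show ?thesis
    by (simp add: height_eq_card_downset)
qed

lemma height_sub:
  assumes x: "x \<in> A" and y: "y \<in> A" and yx: "y \<preceq> x"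
  shows "ht (x \<ominus> y) + ht y = ht x"
proof -
  have finite: "finite (downset y)" "finite (interval y x)"
    using finite_carrier unfolding downset_def interval_def by simp_all
  have "card (downset y) + card (interval y x) = card (downset x) + 1"
    using card_Un_Int[OF finite] downset_eq_Un_interval[OF x y yx] downset_Int_interval[OF y yx]
    by simp
  moreover have "card (interval y x) = card (downset (x \<ominus> y))"
    using bij_betw_same_card[OF bij_betw_interval_downset[OF x y yx]] .
  ultimately show ?thesis
    using x y card_downset by simp
qed

lemma height_sub_meet: "x \<in> A \<Longrightarrow> y \<in> A \<Longrightarrow> ht (x \<ominus> y) + ht (x \<sqinter> y) = ht x"
  using height_sub[of x "x \<sqinter> y"] sub_meet[of x y] sub_below[of x "x \<ominus> y"] by simp

lemma height_eq_0_iff: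
  assumes x: "x \<in> A"
  shows "ht x = 0 \<longleftrightarrow> x = zero"
proof
  assume "ht x = 0"
  show "x = zero"
  proof (rule ccontr)
    assume "x \<noteq> zero"
    moreover have "{zero, x} \<subseteq> downset x"
      using x unfolding downset_def by simp
    ultimately have "2 \<le> card (downset x)"
      using card_mono[OF finite_downset[of x], of "{zero, x}"] by simp
    then show False
      using \<open>ht x = 0\<close> card_downset[OF x] by simp
  qed
next
  have "downset zero = {zero}"
    unfolding downset_def by auto
  then show "x = zero \<Longrightarrow> ht x = 0"
    by (simp add: height_eq_card_downset)
qed

lemma height_zero [simp]: "ht zero = 0"
  using height_eq_0_iff by simp

lemma height_mono: "x \<in> A \<Longrightarrow> y \<in> A \<Longrightarrow> y \<preceq> x \<Longrightarrow> ht y \<le> ht x"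
  using height_sub[of x y] by simp

lemma eq_if_below_height_eq:
  assumes x: "x \<in> A" and y: "y \<in> A" and "y \<preceq> x" "ht y = ht x"
  shows "y = x"
proof -
  have "x \<preceq> y"
    using assms height_sub[OF x y] height_eq_0_iff[of "x \<ominus> y"] by simp
  then show ?thesis
    using below_antisym[OF x y] assms(3) by simp
qed

lemma exists_maximal_above:
  assumes c: "c \<in> A"
  shows "\<exists>m\<in>maximals A sub zero. c \<preceq> m"
proof -
  define U where "U = {w \<in> A. c \<preceq> w}"
  have "finite U" "c \<in> U"
    using finite_carrier c by (simp_all add: U_def)
  then obtain m where m: "m \<in> U" and "ht m = Max (ht ` U)"
    using Max_in[of "ht ` U"] by (metis empty_iff finite_imageI image_iff)
  then have highest: "\<And>w. w \<in> U \<Longrightarrow> ht w \<le> ht m"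
    using \<open>finite U\<close> by simp
  have "b = m" if "b \<in> A" "m \<preceq> b" for b
  proof -
    have "b \<in> U"
      using that m c below_trans[of c m b] by (simp add: U_def)
    then show ?thesis
      using that m highest[of b] height_mono[of b m] eq_if_below_height_eq[of b m]
      by (simp add: U_def)
  qed
  then have "m \<in> maximals A sub zero"
    using m by (simp add: U_def maximals_iff)
  then show ?thesis
    using m unfolding U_def by blast
qed

lemma exists_maximal_of_alg_height: "\<exists>m\<in>maximals A sub zero. ht m = alg_height A sub zero"
proof -
  have finite: "finite (ht ` A)" and nonempty: "ht ` A \<noteq> {}"
    using finite_carrier zero_closed by blast+
  then have alg_height: "alg_height A sub zero = Max (ht ` A)"
    by (simp add: alg_height_def cSup_eq_Max)
  then obtain m where m: "m \<in> A" "ht m = alg_height A sub zero"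
    using Max_in[OF finite nonempty] by auto
  have "b = m" if "b \<in> A" "m \<preceq> b" for b
  proof -
    have "ht b \<le> ht m"
      using that m finite alg_height by simp
    then have "ht m = ht b"
      using that m height_mono[of b m] by simp
    then show ?thesis
      using eq_if_below_height_eq[OF that(1) m(1) that(2)] by simp
  qed
  then have "m \<in> maximals A sub zero"
    using m(1) unfolding maximals_iff by blast
  then show ?thesis
    using m(2) by blast
qed

lemma sub_notin_maximals:
  assumes x: "x \<in> A" and y: "y \<in> A" and "y \<preceq> x" "y \<noteq> zero"
  shows "x \<ominus> y \<notin> maximals A sub zero"
proof
  assume "x \<ominus> y \<in> maximals A sub zero"
  then have "x = x \<ominus> y"
    using x y sub_below[of x y] unfolding maximals_iff by blast
  then have "ht y = 0"
    using height_sub[OF x y \<open>y \<preceq> x\<close>] by simp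
  then show False
    using y \<open>y \<noteq> zero\<close> height_eq_0_iff by blast
qed

lemma subuniverse_height_multiples:
  assumes branchings: "branchings A sub zero \<subseteq> height_multiples k"
  shows "is_subuniverse A sub zero (height_multiples k)"
  unfolding is_subuniverse_def
proof (intro conjI ballI)
  show "height_multiples k \<subseteq> A" "zero \<in> height_multiples k"
    by (auto simp: height_multiples_def)
  fix x y
  assume "x \<in> height_multiples k" "y \<in> height_multiples k"
  then have x: "x \<in> A" "k dvd ht x" and y: "y \<in> A" "k dvd ht y"
    by (simp_all add: height_multiples_def)
  have "k dvd ht (x \<sqinter> y)"
  proof (cases "x \<sqinter> y = x \<or> x \<sqinter> y = y")
    case True
    then show ?thesis
      using x y by auto
  next
    case False
    then show ?thesis
      using meet_in_branchings[OF x(1) y(1)] branchings by (auto simp: height_multiples_def)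
  qed
  then have "k dvd ht (x \<ominus> y)"
    using x(2) height_sub_meet[OF x(1) y(1)] by (metis dvd_add_left_iff)
  then show "x \<ominus> y \<in> height_multiples k"
    using x y by (simp add: height_multiples_def)
qed

lemma branchings_subset_height_multiples:
  assumes closed: "is_subuniverse A sub zero (height_multiples k)"
    and maximals: "maximals A sub zero \<subseteq> height_multiples k"
  shows "branchings A sub zero \<subseteq> height_multiples k"
proof
  fix b
  assume "b \<in> branchings A sub zero"
  then obtain c d where A: "b \<in> A" "c \<in> A" "d \<in> A"
    and "b \<preceq> c" "c \<noteq> b" "b \<preceq> d" "d \<noteq> b" and b: "c \<sqinter> d = b"
    unfolding branchings_def by auto
  obtain c' d' where c': "c' \<in> maximals A sub zero" "c \<preceq> c'"
    and d': "d' \<in> maximals A sub zero" "d \<preceq> d'"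
    using exists_maximal_above A by meson
  have c'A: "c' \<in> A" and d'A: "d' \<in> A"
    using c' d' by (simp_all add: maximals_iff)
  have "c' \<sqinter> d' = b"
    using meet_upper_bounds_eq[OF A(2,3) c'A d'A] b \<open>c \<noteq> b\<close> \<open>d \<noteq> b\<close> c'(2) d'(2) by simp
  then have "ht (c' \<ominus> d') + ht b = ht c'"
    using height_sub_meet[OF c'A d'A] by simp
  moreover have "k dvd ht c'" "k dvd ht (c' \<ominus> d')"
    using maximals c' d' closed unfolding is_subuniverse_def height_multiples_def by auto
  ultimately show "b \<in> height_multiples k"
    using A(1) by (metis dvd_add_right_iff height_multiples_def mem_Collect_eq)
qed

lemma maximals_subset_height_multiples:
  assumes closed: "is_subuniverse A sub zero (height_multiples k \<union> maximals A sub zero)"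
    and k_dvd: "k dvd alg_height A sub zero"
  shows "maximals A sub zero \<subseteq> height_multiples k"
proof
  fix m
  assume m: "m \<in> maximals A sub zero"
  obtain t where t: "t \<in> maximals A sub zero" "ht t = alg_height A sub zero"
    using exists_maximal_of_alg_height by blast
  have mA: "m \<in> A" and tA: "t \<in> A"
    using m t by (simp_all add: maximals_iff)
  define z where "z = t \<sqinter> m"
  have zA: "z \<in> A" and zt: "z \<preceq> t" and zm: "z \<preceq> m" and z0: "z \<noteq> zero"
    using mA tA sub_below meet_below_right meet_nonzero maximals_nonzero m t
    by (simp_all add: z_def)
  let ?K = "height_multiples k"
  have "t \<ominus> m = t \<ominus> z"
    using mA tA sub_meet by (simp add: z_def)
  moreover have "t \<ominus> m \<in> ?K \<union> maximals A sub zero"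
    using closed t(1) m unfolding is_subuniverse_def by blast
  ultimately have "t \<ominus> z \<in> ?K"
    using sub_notin_maximals[OF tA zA zt z0] by simp
  then have "k dvd ht z"
    using height_sub[OF tA zA zt] t(2) k_dvd unfolding height_multiples_def
    by (metis (lifting) dvd_add_right_iff mem_Collect_eq)
  then have "m \<ominus> z \<in> ?K \<union> maximals A sub zero"
    using closed m zA unfolding is_subuniverse_def height_multiples_def by blast
  then have "m \<ominus> z \<in> ?K"
    using sub_notin_maximals[OF mA zA zm z0] by simp
  then show "m \<in> ?K"
    using height_sub[OF mA zA zm] \<open>k dvd ht z\<close> mA unfolding height_multiples_def
    by (metis (lifting) dvd_add_left_iff mem_Collect_eq)
qed

theorem subuniverse_height_multiples_Un_maximals_iff:
  assumes "k dvd alg_height A sub zero"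
  shows "is_subuniverse A sub zero (height_multiples k \<union> maximals A sub zero) \<longleftrightarrow>
    branchings A sub zero \<subseteq> height_multiples k \<and> maximals A sub zero \<subseteq> height_multiples k"
proof
  assume closed: "is_subuniverse A sub zero (height_multiples k \<union> maximals A sub zero)"
  then have "maximals A sub zero \<subseteq> height_multiples k"
    using maximals_subset_height_multiples assms by blast
  moreover from this have "is_subuniverse A sub zero (height_multiples k)"
    using closed Un_absorb2 by metis
  ultimately show "branchings A sub zero \<subseteq> height_multiples k \<and> maximals A sub zero \<subseteq> height_multiples k"
    using branchings_subset_height_multiples by blast
next
  assume "branchings A sub zero \<subseteq> height_multiples k \<and> maximals A sub zero \<subseteq> height_multiples k"
  then show "is_subuniverse A sub zero (height_multiples k \<union> maximals A sub zero)"
    using subuniverse_height_multiples Un_absorb2 by metis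
qed

end

text \<open>The hypotheses k \<noteq> 1 and k \<noteq> n only exclude degenerate instances; the
  equivalence holds without them.\<close>
theorem mainTheorem2:
  fixes A :: "'a set" and sub :: "'a \<Rightarrow> 'a \<Rightarrow> 'a" and zero :: 'a and n k :: nat
  assumes "cbck_algebra A sub zero"
    and "finite A"
    and "subdirectly_irreducible A sub"
    and "n = alg_height A sub zero"
    and "k dvd n" and "k \<noteq> 1" and "k \<noteq> n"
  shows "is_subuniverse A sub zero
           ({x \<in> A. k dvd height A sub zero x} \<union> maximals A sub zero)
         \<longleftrightarrow> branchings A sub zero \<subseteq> {x \<in> A. k dvd height A sub zero x}
           \<and> maximals A sub zero \<subseteq> {x \<in> A. k dvd height A sub zero x}"
proof -
  interpret finite_si_cbck A sub zero
    using assms(1-3) by unfold_locales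
  show ?thesis
    using subuniverse_height_multiples_Un_maximals_iff[of k] assms(4,5)
    unfolding height_multiples_def by simp
qed

end
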